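(* Let $(G_1,v_1)$ and $(G_2,v_2)$ be Brill–Noether general once-marked graphs of genera $g_1,g_2$, and let $G$ be the graph of genus $g=g_1+g_2$ obtained from the disjoint union of $G_1$ and $G_2$ by identifying $v_1$ with $v_2$. Then $G$ is Brill–Noether general.
   Context: A graph is a finite, connected, loopless multigraph (parallel edges allowed); its genus is $g=|E(G)|-|V(G)|+1$. A divisor is an element of the free abelian group on $V(G)$. Linear equivalence is generated by chip-firing (firing $w$ subtracts $\mathrm{val}(w)$ chips from $w$ and adds to each other vertex the number of edges joining it to $w$). The rank $r(D)$ is $-1$ if $D$ is not equivalent to an effective divisor, else the largest $r\ge0$ such that $D-E$ is equivalent to an effective divisor for every effective $E$ of degree $r$. A graph $G$ of genus $g$ is Brill–Noether general if for every divisor $D$ and every integer $r$ with $0\le r\le r(D)$, $g-(r+1)(g-\deg D+r)\ge0$. For a vertex $v$ and divisor $D$ on a genus-$g$ graph, $s_i(D,v)=\min\{\ell\in\mathbb Z: r(D+\ell v)\ge i\}$ and $\lambda_i(D,v)=i-s_i(D,v)+g-\deg D$ for $i\ge0$; the Weierstrass partition $\lambda(D,v)=(\lambda_0,\lambda_1,\dots)$ is a nonincreasing sequence of nonnegative integers, finitely many nonzero, and $|\lambda(D,v)|=\sum_i\lambda_i(D,v)$. A once-marked graph $(G,v)$ of genus $g$ is Brill–Noether general if $|\lambda(D,v)|\le g$ for every divisor $D$ on $G$. *)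

theory Defs
  imports Main
begin

definition adj_rel :: "'a set \<Rightarrow> ('a \<Rightarrow> 'a \<Rightarrow> nat) \<Rightarrow> ('a \<times> 'a) set" where
  "adj_rel V m = {(a, b). a \<in> V \<and> b \<in> V \<and> m a b > 0}"

definition is_graph :: "'a set \<Rightarrow> ('a \<Rightarrow> 'a \<Rightarrow> nat) \<Rightarrow> bool" where
  "is_graph V m \<longleftrightarrow> finite V \<and> V \<noteq> {}
     \<and> (\<forall>x y. m x y = m y x)
     \<and> (\<forall>x. m x x = 0)
     \<and> (\<forall>x y. x \<notin> V \<longrightarrow> m x y = 0)
     \<and> (\<forall>x\<in>V. \<forall>y\<in>V. (x, y) \<in> (adj_rel V m)\<^sup>*)"

definition num_edges :: "'a set \<Rightarrow> ('a \<Rightarrow> 'a \<Rightarrow> nat) \<Rightarrow> nat" where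
  "num_edges V m = (\<Sum>x\<in>V. \<Sum>y\<in>V. m x y) div 2"

definition genus :: "'a set \<Rightarrow> ('a \<Rightarrow> 'a \<Rightarrow> nat) \<Rightarrow> int" where
  "genus V m = int (num_edges V m) - int (card V) + 1"

definition valence :: "'a set \<Rightarrow> ('a \<Rightarrow> 'a \<Rightarrow> nat) \<Rightarrow> 'a \<Rightarrow> nat" where
  "valence V m w = (\<Sum>u\<in>V. m w u)"

definition divisor :: "'a set \<Rightarrow> ('a \<Rightarrow> int) \<Rightarrow> bool" where
  "divisor V D \<longleftrightarrow> (\<forall>x. x \<notin> V \<longrightarrow> D x = 0)"

definition deg :: "'a set \<Rightarrow> ('a \<Rightarrow> int) \<Rightarrow> int" where
  "deg V D = (\<Sum>x\<in>V. D x)"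

definition effective :: "'a set \<Rightarrow> ('a \<Rightarrow> int) \<Rightarrow> bool" where
  "effective V D \<longleftrightarrow> (\<forall>x\<in>V. D x \<ge> 0)"

text \<open>Firing the vertices according to the script f (f w = number of times w fires,
possibly negative) changes D into D - laplacian f.  Firing w once alone subtracts
valence w chips from w and adds m u w chips to every other vertex u.\<close>

definition laplacian :: "'a set \<Rightarrow> ('a \<Rightarrow> 'a \<Rightarrow> nat) \<Rightarrow> ('a \<Rightarrow> int) \<Rightarrow> 'a \<Rightarrow> int" where
  "laplacian V m f u = (\<Sum>w\<in>V. int (m u w) * (f u - f w))"

definition lin_equiv :: "'a set \<Rightarrow> ('a \<Rightarrow> 'a \<Rightarrow> nat) \<Rightarrow> ('a \<Rightarrow> int) \<Rightarrow> ('a \<Rightarrow> int) \<Rightarrow> bool" where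
  "lin_equiv V m D D' \<longleftrightarrow> (\<exists>f. D' = (\<lambda>u. D u - laplacian V m f u))"

definition winnable :: "'a set \<Rightarrow> ('a \<Rightarrow> 'a \<Rightarrow> nat) \<Rightarrow> ('a \<Rightarrow> int) \<Rightarrow> bool" where
  "winnable V m D \<longleftrightarrow> (\<exists>D'. lin_equiv V m D D' \<and> effective V D')"

definition rank :: "'a set \<Rightarrow> ('a \<Rightarrow> 'a \<Rightarrow> nat) \<Rightarrow> ('a \<Rightarrow> int) \<Rightarrow> int" where
  "rank V m D = (if \<not> winnable V m D then -1
     else int (GREATEST r::nat. \<forall>E. divisor V E \<and> effective V E \<and> deg V E = int r
                 \<longrightarrow> winnable V m (\<lambda>x. D x - E x)))"

definition BN_general :: "'a set \<Rightarrow> ('a \<Rightarrow> 'a \<Rightarrow> nat) \<Rightarrow> bool" where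
  "BN_general V m \<longleftrightarrow> (\<forall>D. divisor V D \<longrightarrow> (\<forall>r::int. 0 \<le> r \<and> r \<le> rank V m D \<longrightarrow>
      genus V m - (r + 1) * (genus V m - deg V D + r) \<ge> 0))"

definition s_idx :: "'a set \<Rightarrow> ('a \<Rightarrow> 'a \<Rightarrow> nat) \<Rightarrow> ('a \<Rightarrow> int) \<Rightarrow> 'a \<Rightarrow> nat \<Rightarrow> int" where
  "s_idx V m D v i = (LEAST l::int. rank V m (\<lambda>x. D x + (if x = v then l else 0)) \<ge> int i)"

definition lambda_idx :: "'a set \<Rightarrow> ('a \<Rightarrow> 'a \<Rightarrow> nat) \<Rightarrow> ('a \<Rightarrow> int) \<Rightarrow> 'a \<Rightarrow> nat \<Rightarrow> int" where
  "lambda_idx V m D v i = int i - s_idx V m D v i + genus V m - deg V D"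

text \<open>|lambda(D,v)| \<le> g, expressed as: every partial sum of the (nonnegative,
eventually zero) Weierstrass partition is at most g.\<close>

definition marked_BN_general :: "'a set \<Rightarrow> ('a \<Rightarrow> 'a \<Rightarrow> nat) \<Rightarrow> 'a \<Rightarrow> bool" where
  "marked_BN_general V m v \<longleftrightarrow> v \<in> V \<and> (\<forall>D. divisor V D \<longrightarrow>
      (\<forall>n. (\<Sum>i<n. lambda_idx V m D v i) \<le> genus V m))"

text \<open>Wedge sum: disjoint union of G1 and G2 with v1 and v2 identified.  The
identified vertex is represented by Inl v1; Inr v2 is not a vertex.\<close>

definition wedge_vertices :: "'a set \<Rightarrow> 'a \<Rightarrow> 'b set \<Rightarrow> 'b \<Rightarrow> ('a + 'b) set" where
  "wedge_vertices V1 v1 V2 v2 = Inl ` V1 \<union> Inr ` (V2 - {v2})"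

definition wedge_edges :: "('a \<Rightarrow> 'a \<Rightarrow> nat) \<Rightarrow> 'a \<Rightarrow> ('b \<Rightarrow> 'b \<Rightarrow> nat) \<Rightarrow> 'b
     \<Rightarrow> ('a + 'b) \<Rightarrow> ('a + 'b) \<Rightarrow> nat" where
  "wedge_edges m1 v1 m2 v2 x y = (case (x, y) of
      (Inl a, Inl b) \<Rightarrow> m1 a b
    | (Inr a, Inr b) \<Rightarrow> (if a = v2 \<or> b = v2 then 0 else m2 a b)
    | (Inl a, Inr b) \<Rightarrow> (if a = v1 \<and> b \<noteq> v2 then m2 v2 b else 0)
    | (Inr a, Inl b) \<Rightarrow> (if b = v1 \<and> a \<noteq> v2 then m2 a v2 else 0))"

end

theory Submission
  imports Defs
begin

text \<open>Write a divisor \<open>D\<close> on the wedge as \<open>A \<oplus> B\<close> with \<open>A\<close> on \<open>G\<^sub>1\<close> and \<open>B\<close> on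
  \<open>G\<^sub>2\<close>, the chips of both at the wedge point being put together. A winning firing script on
  the wedge restricts to the two sides and splits the chips it leaves on the wedge point
  between them. Hence if \<open>r(A \<oplus> B) \<ge> i + j\<close>, then for every \<open>l\<close> either
  \<open>r(A + l v\<^sub>1) \<ge> i\<close> or \<open>r(B - (l + 1) v\<^sub>2) \<ge> j\<close>, that is
  \<open>s\<^sub>i(A, v\<^sub>1) + s\<^sub>j(B, v\<^sub>2) \<le> 0\<close>. For \<open>0 \<le> r \<le> r(D)\<close> this gives
  \<open>\<lambda>\<^sub>i(A, v\<^sub>1) + \<lambda>\<^sub>r\<^sub>-\<^sub>i(B, v\<^sub>2) \<ge> g - deg D + r\<close> for \<open>i = 0, \<dots>, r\<close>, and summing,
  \<open>(r + 1)(g - deg D + r) \<le> |\<lambda>(A, v\<^sub>1)| + |\<lambda>(B, v\<^sub>2)| \<le> g\<^sub>1 + g\<^sub>2 = g\<close>.\<close>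

lemma sum_laplacian_eq_0:
  assumes "finite V" "\<forall>x y. m x y = m y x"
  shows "(\<Sum>u\<in>V. laplacian V m f u) = 0"
proof -
  have "(\<Sum>u\<in>V. \<Sum>w\<in>V. int (m u w) * f w) = (\<Sum>w\<in>V. \<Sum>u\<in>V. int (m u w) * f w)"
    by (rule sum.swap)
  also have "\<dots> = (\<Sum>u\<in>V. \<Sum>w\<in>V. int (m u w) * f u)"
    using assms(2) by simp
  finally show ?thesis
    unfolding laplacian_def by (simp add: right_diff_distrib sum_subtractf)
qed

lemma winnable_imp_deg_nonneg:
  assumes "finite V" "\<forall>x y. m x y = m y x" "winnable V m D"
  shows "0 \<le> deg V D"
proof -
  obtain f where "effective V (\<lambda>u. D u - laplacian V m f u)"
    using assms(3) unfolding winnable_def lin_equiv_def by auto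
  then have "0 \<le> (\<Sum>u\<in>V. D u - laplacian V m f u)"
    unfolding effective_def by (intro sum_nonneg) auto
  also have "\<dots> = deg V D"
    using sum_laplacian_eq_0[OF assms(1,2)] by (simp add: sum_subtractf deg_def)
  finally show ?thesis .
qed

lemma winnable_mono:
  assumes "winnable V m D" "\<forall>x\<in>V. D x \<le> D' x"
  shows "winnable V m D'"
proof -
  obtain f where "effective V (\<lambda>u. D u - laplacian V m f u)"
    using assms(1) unfolding winnable_def lin_equiv_def by auto
  then have "effective V (\<lambda>u. D' u - laplacian V m f u)"
    using assms(2) unfolding effective_def by force
  then show ?thesis unfolding winnable_def lin_equiv_def by blast
qed

lemma deg_add_at:
  assumes "finite V" "v \<in> V"
  shows "deg V (\<lambda>x. D x + (if x = v then k else 0)) = deg V D + k"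
  using assms by (simp add: deg_def sum.distrib)

definition rank_at_least :: "'a set \<Rightarrow> ('a \<Rightarrow> 'a \<Rightarrow> nat) \<Rightarrow> ('a \<Rightarrow> int) \<Rightarrow> nat \<Rightarrow> bool" where
  "rank_at_least V m D r \<longleftrightarrow> (\<forall>E. divisor V E \<and> effective V E \<and> deg V E = int r
     \<longrightarrow> winnable V m (\<lambda>x. D x - E x))"

lemma rank_at_least_mono:
  assumes "finite V" "v \<in> V" "rank_at_least V m D r" "s \<le> r"
  shows "rank_at_least V m D s"
  unfolding rank_at_least_def
proof (intro allI impI)
  fix E assume E: "divisor V E \<and> effective V E \<and> deg V E = int s"
  let ?E = "\<lambda>x. E x + (if x = v then int (r - s) else 0)"
  have "divisor V ?E" "effective V ?E" "deg V ?E = int r"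
    using E assms(2,4) deg_add_at[OF assms(1,2)] unfolding divisor_def effective_def by auto
  then have "winnable V m (\<lambda>x. D x - ?E x)"
    using assms(3) unfolding rank_at_least_def by blast
  then show "winnable V m (\<lambda>x. D x - E x)"
    by (rule winnable_mono) auto
qed

lemma rank_at_least_imp_winnable:
  assumes "finite V" "v \<in> V" "rank_at_least V m D r"
  shows "winnable V m D"
proof -
  have "rank_at_least V m D 0"
    using rank_at_least_mono[OF assms] by simp
  moreover have "divisor V (\<lambda>x. 0) \<and> effective V (\<lambda>x. 0) \<and> deg V (\<lambda>x. 0) = int 0"
    unfolding divisor_def effective_def deg_def by simp
  ultimately show ?thesis unfolding rank_at_least_def by auto
qed

lemma rank_at_least_le_deg:
  assumes "finite V" "v \<in> V" "\<forall>x y. m x y = m y x" "rank_at_least V m D r"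
  shows "int r \<le> deg V D"
proof -
  let ?E = "\<lambda>x. if x = v then int r else 0"
  have "divisor V ?E \<and> effective V ?E \<and> deg V ?E = int r"
    using assms(1,2) unfolding divisor_def effective_def deg_def by auto
  then have "winnable V m (\<lambda>x. D x - ?E x)"
    using assms(4) unfolding rank_at_least_def by blast
  then have "0 \<le> deg V (\<lambda>x. D x - ?E x)"
    using winnable_imp_deg_nonneg assms(1,3) by blast
  also have "deg V (\<lambda>x. D x - ?E x) = deg V D - int r"
    using assms(1,2) by (simp add: deg_def sum_subtractf)
  finally show ?thesis by simp
qed

lemma winnable_imp_rank_at_least_0:
  assumes "finite V" "winnable V m D"
  shows "rank_at_least V m D 0"
  unfolding rank_at_least_def
proof (intro allI impI)
  fix E assume E: "divisor V E \<and> effective V E \<and> deg V E = int 0"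
  then have "\<forall>x\<in>V. E x = 0"
    using sum_nonneg_eq_0_iff[OF assms(1)] unfolding deg_def effective_def by auto
  then show "winnable V m (\<lambda>x. D x - E x)"
    using assms(2) by (elim winnable_mono) auto
qed

lemma int_le_rank_iff:
  assumes "finite V" "v \<in> V" "\<forall>x y. m x y = m y x"
  shows "int r \<le> rank V m D \<longleftrightarrow> rank_at_least V m D r"
proof -
  have bound: "\<forall>s. rank_at_least V m D s \<longrightarrow> s \<le> nat (deg V D)"
    using rank_at_least_le_deg[OF assms] by fastforce
  have rank: "winnable V m D \<Longrightarrow> rank V m D = int (GREATEST s. rank_at_least V m D s)"
    unfolding rank_def rank_at_least_def by simp
  show ?thesis
  proof
    assume "int r \<le> rank V m D"
    then have w: "winnable V m D" and "r \<le> (GREATEST s. rank_at_least V m D s)"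
      using rank by (auto simp: rank_def split: if_splits)
    moreover have "rank_at_least V m D (GREATEST s. rank_at_least V m D s)"
      using GreatestI_nat winnable_imp_rank_at_least_0[OF assms(1) w] bound by blast
    ultimately show "rank_at_least V m D r"
      using rank_at_least_mono[OF assms(1,2)] by blast
  next
    assume r: "rank_at_least V m D r"
    then have "r \<le> (GREATEST s. rank_at_least V m D s)"
      using Greatest_le_nat bound by blast
    then show "int r \<le> rank V m D"
      using rank rank_at_least_imp_winnable[OF assms(1,2) r] by simp
  qed
qed

lemma winnable_cong:
  assumes "\<forall>x\<in>V. D x = D' x"
  shows "winnable V m D \<longleftrightarrow> winnable V m D'"
  using assms winnable_mono[of V m D D'] winnable_mono[of V m D' D] by auto

lemma rank_cong:
  assumes "\<forall>x\<in>V. D x = D' x"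
  shows "rank V m D = rank V m D'"
proof -
  have "winnable V m (\<lambda>x. D x - E x) \<longleftrightarrow> winnable V m (\<lambda>x. D' x - E x)" for E
    using assms by (intro winnable_cong) auto
  then show ?thesis
    unfolding rank_def using winnable_cong[OF assms] by simp
qed

lemma rank_nonneg_add_at_imp_ge:
  assumes "finite V" "v \<in> V" "\<forall>x y. m x y = m y x"
    and "0 \<le> rank V m (\<lambda>x. D x + (if x = v then l else 0))"
  shows "- deg V D \<le> l"
proof -
  have "winnable V m (\<lambda>x. D x + (if x = v then l else 0))"
    using assms(4) unfolding rank_def by (auto split: if_splits)
  then show ?thesis
    using winnable_imp_deg_nonneg[OF assms(1,3)] deg_add_at[OF assms(1,2)] by fastforce
qed

lemma sum_wedge_vertices:
  assumes "finite V1" "finite V2"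
  shows "(\<Sum>x\<in>wedge_vertices V1 v1 V2 v2. h x)
    = (\<Sum>a\<in>V1. h (Inl a)) + (\<Sum>b\<in>V2 - {v2}. h (Inr b))"
proof -
  have "(\<Sum>x\<in>wedge_vertices V1 v1 V2 v2. h x)
      = (\<Sum>x\<in>Inl ` V1. h x) + (\<Sum>x\<in>Inr ` (V2 - {v2}). h x)"
    unfolding wedge_vertices_def using assms by (intro sum.union_disjoint) auto
  then show ?thesis by (simp add: sum.reindex)
qed

lemma card_wedge_vertices:
  assumes "finite V1" "finite V2" "v2 \<in> V2"
  shows "card (wedge_vertices V1 v1 V2 v2) + 1 = card V1 + card V2"
proof -
  have "card (wedge_vertices V1 v1 V2 v2)
      = card (Inl ` V1 :: ('a + 'b) set) + card (Inr ` (V2 - {v2}) :: ('a + 'b) set)"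
    unfolding wedge_vertices_def using assms by (intro card_Un_disjoint) auto
  then show ?thesis
    using assms card_Suc_Diff1[OF assms(2,3)] by (simp add: card_image)
qed

lemma wedge_edges_sym:
  assumes "\<forall>x y. m1 x y = m1 y x" "\<forall>x y. m2 x y = m2 y x"
  shows "\<forall>x y. wedge_edges m1 v1 m2 v2 x y = wedge_edges m1 v1 m2 v2 y x"
  using assms unfolding wedge_edges_def by (auto split: sum.splits)

lemma sum_sum_wedge_edges:
  assumes "finite V1" "finite V2" "v1 \<in> V1" "v2 \<in> V2" "m2 v2 v2 = 0"
  shows "(\<Sum>x\<in>wedge_vertices V1 v1 V2 v2. \<Sum>y\<in>wedge_vertices V1 v1 V2 v2. wedge_edges m1 v1 m2 v2 x y)
     = (\<Sum>a\<in>V1. \<Sum>b\<in>V1. m1 a b) + (\<Sum>a\<in>V2. \<Sum>b\<in>V2. m2 a b)"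
proof -
  let ?V2' = "V2 - {v2}"
  have left_cross: "(\<Sum>a\<in>V1. \<Sum>b\<in>?V2'. if a = v1 then m2 v2 b else 0) = (\<Sum>b\<in>?V2'. m2 v2 b)"
    using assms(1,3) by (subst sum.swap) simp
  have "(\<Sum>x\<in>wedge_vertices V1 v1 V2 v2. \<Sum>y\<in>wedge_vertices V1 v1 V2 v2. wedge_edges m1 v1 m2 v2 x y)
    = (\<Sum>a\<in>V1. \<Sum>b\<in>V1. m1 a b) + (\<Sum>b\<in>?V2'. m2 v2 b)
      + (\<Sum>b\<in>?V2'. m2 b v2 + (\<Sum>c\<in>?V2'. m2 b c))"
    using assms(1,3) left_cross
    by (simp add: sum_wedge_vertices[OF assms(1,2)] wedge_edges_def sum.distrib)
  also have "(\<Sum>b\<in>?V2'. m2 v2 b) = (\<Sum>b\<in>V2. m2 v2 b)"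
    using assms(5) by (simp add: sum.remove[OF assms(2,4)])
  also have "(\<Sum>b\<in>?V2'. m2 b v2 + (\<Sum>c\<in>?V2'. m2 b c)) = (\<Sum>b\<in>?V2'. \<Sum>c\<in>V2. m2 b c)"
    by (simp add: sum.remove[OF assms(2,4)])
  finally show ?thesis
    by (simp add: add.assoc sum.remove[OF assms(2,4), of "\<lambda>a. \<Sum>b\<in>V2. m2 a b"])
qed

lemma even_sum_sum_sym:
  assumes "finite V" "\<forall>x y. m x y = m y x" "\<forall>x. m x x = 0"
  shows "even (\<Sum>x\<in>V. \<Sum>y\<in>V. (m x y :: nat))"
  using assms(1)
proof (induction V rule: finite_induct)
  case (insert a F)
  have "(\<Sum>x\<in>insert a F. \<Sum>y\<in>insert a F. m x y) = 2 * (\<Sum>y\<in>F. m a y) + (\<Sum>x\<in>F. \<Sum>y\<in>F. m x y)"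
    using insert(1,2) assms(2,3) by (simp add: sum.distrib)
  then show ?case using insert.IH by simp
qed simp

lemma genus_wedge:
  assumes "is_graph V1 m1" "is_graph V2 m2" "v1 \<in> V1" "v2 \<in> V2"
  shows "genus (wedge_vertices V1 v1 V2 v2) (wedge_edges m1 v1 m2 v2) = genus V1 m1 + genus V2 m2"
proof -
  have f: "finite V1" "finite V2" and s: "\<forall>x y. m1 x y = m1 y x" "\<forall>x y. m2 x y = m2 y x"
    and l: "\<forall>x. m1 x x = 0" "\<forall>x. m2 x x = 0"
    using assms(1,2) unfolding is_graph_def by auto
  have "num_edges (wedge_vertices V1 v1 V2 v2) (wedge_edges m1 v1 m2 v2)
      = num_edges V1 m1 + num_edges V2 m2"
    using even_sum_sum_sym[OF f(1) s(1) l(1)] even_sum_sum_sym[OF f(2) s(2) l(2)]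
    unfolding num_edges_def sum_sum_wedge_edges[where ?m2.0 = m2, OF f assms(3,4) l(2)[rule_format]]
    by (auto elim!: evenE)
  moreover have "int (card (wedge_vertices V1 v1 V2 v2)) = int (card V1) + int (card V2) - 1"
    using card_wedge_vertices[OF f assms(4), of v1] by linarith
  ultimately show ?thesis
    unfolding genus_def by simp
qed

definition wedge_restrict_right :: "'a \<Rightarrow> 'b \<Rightarrow> ('a + 'b \<Rightarrow> 'c) \<Rightarrow> 'b \<Rightarrow> 'c" where
  "wedge_restrict_right v1 v2 f b = (if b = v2 then f (Inl v1) else f (Inr b))"

lemma laplacian_wedge_Inl:
  assumes "finite V1" "finite V2" "v2 \<in> V2" "m2 v2 v2 = 0"
  shows "laplacian (wedge_vertices V1 v1 V2 v2) (wedge_edges m1 v1 m2 v2) f (Inl a)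
       = laplacian V1 m1 (\<lambda>a. f (Inl a)) a
         + (if a = v1 then laplacian V2 m2 (wedge_restrict_right v1 v2 f) v2 else 0)"
proof -
  have "laplacian V2 m2 (wedge_restrict_right v1 v2 f) v2
      = (\<Sum>b\<in>V2 - {v2}. int (m2 v2 b) * (f (Inl v1) - f (Inr b)))"
    using assms(4) unfolding laplacian_def
    by (simp add: sum.remove[OF assms(2,3)] wedge_restrict_right_def)
  then show ?thesis
    unfolding laplacian_def sum_wedge_vertices[OF assms(1,2)] by (simp add: wedge_edges_def)
qed

lemma laplacian_wedge_Inr:
  assumes "finite V1" "finite V2" "v1 \<in> V1" "v2 \<in> V2" "b \<noteq> v2"
  shows "laplacian (wedge_vertices V1 v1 V2 v2) (wedge_edges m1 v1 m2 v2) f (Inr b)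
       = laplacian V2 m2 (wedge_restrict_right v1 v2 f) b"
proof -
  have "(\<Sum>a\<in>V1. int (if a = v1 then m2 b v2 else 0) * (f (Inr b) - f (Inl a)))
      = int (m2 b v2) * (f (Inr b) - f (Inl v1))"
    using assms(1,3) by (simp add: if_distrib[of int] if_distrib[of "\<lambda>x. x * _"] cong: if_cong)
  then show ?thesis
    unfolding laplacian_def sum_wedge_vertices[OF assms(1,2)] using assms(5)
    by (simp add: wedge_edges_def sum.remove[OF assms(2,4)] wedge_restrict_right_def)
qed

definition wedge_divisor :: "'a \<Rightarrow> 'b \<Rightarrow> ('a \<Rightarrow> int) \<Rightarrow> ('b \<Rightarrow> int) \<Rightarrow> 'a + 'b \<Rightarrow> int" where
  "wedge_divisor v1 v2 A B x = (case x of
      Inl a \<Rightarrow> A a + (if a = v1 then B v2 else 0)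
    | Inr b \<Rightarrow> (if b = v2 then 0 else B b))"

lemma wedge_divisor_diff:
  "wedge_divisor v1 v2 (\<lambda>x. A x - E1 x) (\<lambda>x. B x - E2 x)
     = (\<lambda>x. wedge_divisor v1 v2 A B x - wedge_divisor v1 v2 E1 E2 x)"
  by (auto simp: wedge_divisor_def split: sum.splits)

lemma divisor_wedge_divisor:
  assumes "divisor V1 A" "divisor V2 B" "v1 \<in> V1"
  shows "divisor (wedge_vertices V1 v1 V2 v2) (wedge_divisor v1 v2 A B)"
  using assms unfolding divisor_def wedge_vertices_def wedge_divisor_def
  by (auto split: sum.splits)

lemma effective_wedge_divisor:
  assumes "effective V1 A" "effective V2 B" "v2 \<in> V2"
  shows "effective (wedge_vertices V1 v1 V2 v2) (wedge_divisor v1 v2 A B)"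
  using assms unfolding effective_def wedge_vertices_def wedge_divisor_def
  by (auto split: sum.splits)

lemma deg_wedge_divisor:
  assumes "finite V1" "finite V2" "v1 \<in> V1" "v2 \<in> V2"
  shows "deg (wedge_vertices V1 v1 V2 v2) (wedge_divisor v1 v2 A B) = deg V1 A + deg V2 B"
  using assms
  by (simp add: deg_def sum_wedge_vertices wedge_divisor_def sum.distrib sum.remove[OF assms(2,4)])

lemma divisor_wedge_decompose:
  assumes "divisor (wedge_vertices V1 v1 V2 v2) D"
  obtains A B where "divisor V1 A" "divisor V2 B"
    "\<forall>x\<in>wedge_vertices V1 v1 V2 v2. D x = wedge_divisor v1 v2 A B x"
proof
  show "divisor V1 (\<lambda>a. D (Inl a))" "divisor V2 (\<lambda>b. if b = v2 then 0 else D (Inr b))"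
    using assms unfolding divisor_def wedge_vertices_def by auto
  show "\<forall>x\<in>wedge_vertices V1 v1 V2 v2. D x
      = wedge_divisor v1 v2 (\<lambda>a. D (Inl a)) (\<lambda>b. if b = v2 then 0 else D (Inr b)) x"
    unfolding wedge_vertices_def wedge_divisor_def by (auto split: if_splits)
qed

text \<open>\<open>c1 + c2\<close> is the number of chips the winning script leaves on the wedge point.\<close>

lemma winnable_wedge_divisorD:
  assumes "finite V1" "finite V2" "v1 \<in> V1" "v2 \<in> V2" "m2 v2 v2 = 0"
    and "winnable (wedge_vertices V1 v1 V2 v2) (wedge_edges m1 v1 m2 v2) (wedge_divisor v1 v2 A B)"
  obtains c1 c2 where "0 \<le> c1 + c2"
    "winnable V1 m1 (\<lambda>x. A x - (if x = v1 then c1 else 0))"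
    "winnable V2 m2 (\<lambda>x. B x - (if x = v2 then c2 else 0))"
proof -
  let ?W = "wedge_vertices V1 v1 V2 v2" and ?w = "wedge_edges m1 v1 m2 v2"
  obtain f where "effective ?W (\<lambda>u. wedge_divisor v1 v2 A B u - laplacian ?W ?w f u)"
    using assms(6) unfolding winnable_def lin_equiv_def by auto
  then have eff: "\<And>u. u \<in> ?W \<Longrightarrow> 0 \<le> wedge_divisor v1 v2 A B u - laplacian ?W ?w f u"
    unfolding effective_def by blast
  define L1 where "L1 = laplacian V1 m1 (\<lambda>a. f (Inl a))"
  define L2 where "L2 = laplacian V2 m2 (wedge_restrict_right v1 v2 f)"
  define c1 where "c1 = A v1 - L1 v1"
  define c2 where "c2 = B v2 - L2 v2"
  have left: "0 \<le> A a + (if a = v1 then B v2 else 0) - (L1 a + (if a = v1 then L2 v2 else 0))"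
    if "a \<in> V1" for a
    using eff[of "Inl a"] that laplacian_wedge_Inl[where ?m2.0 = m2, OF assms(1,2,4,5)]
    unfolding L1_def L2_def by (simp add: wedge_vertices_def wedge_divisor_def)
  have right: "0 \<le> B b - L2 b" if "b \<in> V2" "b \<noteq> v2" for b
    using eff[of "Inr b"] that laplacian_wedge_Inr[OF assms(1-4)]
    unfolding L2_def by (simp add: wedge_vertices_def wedge_divisor_def)
  have "0 \<le> c1 + c2"
    using left[OF assms(3)] unfolding c1_def c2_def by simp
  moreover have "effective V1 (\<lambda>a. A a - (if a = v1 then c1 else 0) - L1 a)"
    using left unfolding effective_def c1_def by fastforce
  moreover have "effective V2 (\<lambda>b. B b - (if b = v2 then c2 else 0) - L2 b)"
    using right unfolding effective_def c2_def by fastforce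
  ultimately show thesis
    using that unfolding winnable_def lin_equiv_def L1_def L2_def by blast
qed

lemma Least_int_bounded_below:
  fixes P :: "int \<Rightarrow> bool"
  assumes "P x" "\<And>y. P y \<Longrightarrow> b \<le> y"
  shows "P (LEAST y. P y)" "\<And>y. P y \<Longrightarrow> (LEAST y. P y) \<le> y"
proof -
  define n where "n = (LEAST n::nat. P (b + int n))"
  have "P (b + int (nat (x - b)))" using assms by simp
  then have Pn: "P (b + int n)" unfolding n_def by (rule LeastI)
  have le: "b + int n \<le> y" if "P y" for y
  proof -
    have "P (b + int (nat (y - b)))" using assms(2) that by simp
    then have "n \<le> nat (y - b)" unfolding n_def by (rule Least_le)
    then show ?thesis using assms(2)[OF that] by linarith
  qed
  have "(LEAST y. P y) = b + int n"
    using Pn le by (intro Least_equality) auto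
  then show "P (LEAST y. P y)" "\<And>y. P y \<Longrightarrow> (LEAST y. P y) \<le> y"
    using Pn le by simp_all
qed

lemma rank_at_least_wedge_divisorD:
  assumes "finite V1" "finite V2" "v1 \<in> V1" "v2 \<in> V2" "m2 v2 v2 = 0"
    and "rank_at_least (wedge_vertices V1 v1 V2 v2) (wedge_edges m1 v1 m2 v2)
      (wedge_divisor v1 v2 A B) (e1 + e2)"
    and "\<not> rank_at_least V1 m1 (\<lambda>x. A x + (if x = v1 then l else 0)) e1"
  shows "rank_at_least V2 m2 (\<lambda>x. B x + (if x = v2 then - (l + 1) else 0)) e2"
proof -
  obtain E1 where E1: "divisor V1 E1" "effective V1 E1" "deg V1 E1 = int e1"
    and not_winnable: "\<not> winnable V1 m1 (\<lambda>x. A x + (if x = v1 then l else 0) - E1 x)"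
    using assms(7) unfolding rank_at_least_def by blast
  show ?thesis
    unfolding rank_at_least_def
  proof (intro allI impI, elim conjE)
    fix E2 assume E2: "divisor V2 E2" "effective V2 E2" "deg V2 E2 = int e2"
    have "winnable (wedge_vertices V1 v1 V2 v2) (wedge_edges m1 v1 m2 v2)
        (\<lambda>x. wedge_divisor v1 v2 A B x - wedge_divisor v1 v2 E1 E2 x)"
      using assms(6) divisor_wedge_divisor[OF E1(1) E2(1) assms(3)]
        effective_wedge_divisor[OF E1(2) E2(2) assms(4)]
        deg_wedge_divisor[OF assms(1-4)] E1(3) E2(3)
      unfolding rank_at_least_def by simp
    then obtain c1 c2 where c: "0 \<le> c1 + c2"
      and w1: "winnable V1 m1 (\<lambda>x. A x - E1 x - (if x = v1 then c1 else 0))"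
      and w2: "winnable V2 m2 (\<lambda>x. B x - E2 x - (if x = v2 then c2 else 0))"
      using winnable_wedge_divisorD[where ?m2.0 = m2, OF assms(1-5)]
      unfolding wedge_divisor_diff[symmetric] by blast
    have "l < - c1"
    proof (rule ccontr)
      assume "\<not> l < - c1"
      then have "winnable V1 m1 (\<lambda>x. A x + (if x = v1 then l else 0) - E1 x)"
        using w1 by (elim winnable_mono) auto
      then show False using not_winnable by blast
    qed
    then show "winnable V2 m2 (\<lambda>x. B x + (if x = v2 then - (l + 1) else 0) - E2 x)"
      using w2 c by (elim winnable_mono) auto
  qed
qed

lemma s_idx_wedge_add_le_0:
  fixes A :: "'a \<Rightarrow> int" and B :: "'b \<Rightarrow> int"
  assumes "finite V1" "finite V2" "v1 \<in> V1" "v2 \<in> V2"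
    and "\<forall>x y. m1 x y = m1 y x" "\<forall>x y. m2 x y = m2 y x" "m2 v2 v2 = 0"
    and "int (e1 + e2) \<le> rank (wedge_vertices V1 v1 V2 v2) (wedge_edges m1 v1 m2 v2)
      (wedge_divisor v1 v2 A B)"
  shows "s_idx V1 m1 A v1 e1 + s_idx V2 m2 B v2 e2 \<le> 0"
proof -
  define P1 where "P1 l \<longleftrightarrow> int e1 \<le> rank V1 m1 (\<lambda>x. A x + (if x = v1 then l else 0))" for l
  define P2 where "P2 l \<longleftrightarrow> int e2 \<le> rank V2 m2 (\<lambda>x. B x + (if x = v2 then l else 0))" for l
  have "finite (wedge_vertices V1 v1 V2 v2)" "Inl v1 \<in> wedge_vertices V1 v1 V2 v2"
    using assms(1-3) unfolding wedge_vertices_def by simp_all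
  from int_le_rank_iff[OF this wedge_edges_sym[OF assms(5,6)]] assms(8)
  have wedge: "rank_at_least (wedge_vertices V1 v1 V2 v2) (wedge_edges m1 v1 m2 v2)
      (wedge_divisor v1 v2 A B) (e1 + e2)"
    by blast
  have P2_if_not_P1: "P2 (- (l + 1))" if "\<not> P1 l" for l
  proof -
    have "\<not> rank_at_least V1 m1 (\<lambda>x. A x + (if x = v1 then l else 0)) e1"
      using that unfolding P1_def int_le_rank_iff[OF assms(1,3,5)] .
    with rank_at_least_wedge_divisorD[where ?m2.0 = m2, OF assms(1-4,7) wedge]
    show ?thesis unfolding P2_def int_le_rank_iff[OF assms(2,4,6)] .
  qed
  have P1_bound: "- deg V1 A \<le> l" if "P1 l" for l
    using that rank_nonneg_add_at_imp_ge[OF assms(1,3,5)] unfolding P1_def by fastforce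
  have P2_bound: "- deg V2 B \<le> l" if "P2 l" for l
    using that rank_nonneg_add_at_imp_ge[OF assms(2,4,6)] unfolding P2_def by fastforce
  have "P1 (deg V2 B)"
    using P2_if_not_P1[of "deg V2 B"] P2_bound by fastforce
  note Least_int_bounded_below[of P1, OF this P1_bound]
  then have "P2 (- (LEAST l. P1 l))"
    using P2_if_not_P1[of "(LEAST l. P1 l) - 1"] by fastforce
  then have "(LEAST l. P2 l) \<le> - (LEAST l. P1 l)"
    using Least_int_bounded_below(2)[of P2, OF _ P2_bound] by blast
  then show ?thesis
    unfolding s_idx_def P1_def[symmetric] P2_def[symmetric] by simp
qed

lemma lambda_sums_wedge_lower_bound:
  fixes A :: "'a \<Rightarrow> int" and B :: "'b \<Rightarrow> int"
  assumes "finite V1" "finite V2" "v1 \<in> V1" "v2 \<in> V2"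
    and "\<forall>x y. m1 x y = m1 y x" "\<forall>x y. m2 x y = m2 y x" "m2 v2 v2 = 0"
    and "int n \<le> rank (wedge_vertices V1 v1 V2 v2) (wedge_edges m1 v1 m2 v2)
      (wedge_divisor v1 v2 A B)"
  shows "(int n + 1) * (int n + genus V1 m1 + genus V2 m2 - deg V1 A - deg V2 B)
    \<le> (\<Sum>i<Suc n. lambda_idx V1 m1 A v1 i) + (\<Sum>i<Suc n. lambda_idx V2 m2 B v2 i)"
proof -
  let ?k = "int n + genus V1 m1 + genus V2 m2 - deg V1 A - deg V2 B"
  let ?l1 = "lambda_idx V1 m1 A v1" and ?l2 = "lambda_idx V2 m2 B v2"
  have "?k \<le> ?l1 i + ?l2 (n - i)" if "i < Suc n" for i
  proof -
    have "s_idx V1 m1 A v1 i + s_idx V2 m2 B v2 (n - i) \<le> 0"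
      by (rule s_idx_wedge_add_le_0[OF assms(1-7)]) (use assms(8) that in simp)
    then show ?thesis
      using that unfolding lambda_idx_def by simp
  qed
  then have "(\<Sum>i<Suc n. ?k) \<le> (\<Sum>i<Suc n. ?l1 i + ?l2 (n - i))"
    by (intro sum_mono) simp
  also have "\<dots> = (\<Sum>i<Suc n. ?l1 i) + (\<Sum>i<Suc n. ?l2 i)"
    using sum.nat_diff_reindex[of ?l2 "Suc n"] by (simp add: sum.distrib)
  finally show ?thesis by (simp add: add.commute)
qed

theorem mainTheorem10:
  fixes V1 :: "'a set" and m1 :: "'a \<Rightarrow> 'a \<Rightarrow> nat" and v1 :: 'a
    and V2 :: "'b set" and m2 :: "'b \<Rightarrow> 'b \<Rightarrow> nat" and v2 :: 'b
  assumes "is_graph V1 m1" and "is_graph V2 m2"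
    and "v1 \<in> V1" and "v2 \<in> V2"
    and "marked_BN_general V1 m1 v1" and "marked_BN_general V2 m2 v2"
  shows "BN_general (wedge_vertices V1 v1 V2 v2) (wedge_edges m1 v1 m2 v2)"
  unfolding BN_general_def
proof (intro allI impI, elim conjE)
  let ?W = "wedge_vertices V1 v1 V2 v2" and ?w = "wedge_edges m1 v1 m2 v2"
  fix D r assume D: "divisor ?W D" and r: "0 \<le> r" "r \<le> rank ?W ?w D"
  have graphs: "finite V1" "finite V2" "\<forall>x y. m1 x y = m1 y x" "\<forall>x y. m2 x y = m2 y x"
    "m2 v2 v2 = 0"
    using assms(1,2) unfolding is_graph_def by auto
  obtain A B where AB: "divisor V1 A" "divisor V2 B" "\<forall>x\<in>?W. D x = wedge_divisor v1 v2 A B x"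
    using divisor_wedge_decompose[OF D] by blast
  have deg: "deg ?W D = deg V1 A + deg V2 B"
    using AB(3) deg_wedge_divisor[OF graphs(1,2) assms(3,4)] unfolding deg_def by simp
  have "int (nat r) \<le> rank ?W ?w (wedge_divisor v1 v2 A B)"
    using r rank_cong[OF AB(3)] by simp
  then have "(int (nat r) + 1) * (int (nat r) + genus V1 m1 + genus V2 m2 - deg V1 A - deg V2 B)
    \<le> (\<Sum>i<Suc (nat r). lambda_idx V1 m1 A v1 i) + (\<Sum>i<Suc (nat r). lambda_idx V2 m2 B v2 i)"
    by (rule lambda_sums_wedge_lower_bound[where ?m2.0 = m2, OF graphs(1,2) assms(3,4) graphs(3-5)])
  moreover have "(\<Sum>i<Suc (nat r). lambda_idx V1 m1 A v1 i) \<le> genus V1 m1"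
    "(\<Sum>i<Suc (nat r). lambda_idx V2 m2 B v2 i) \<le> genus V2 m2"
    using assms(5,6) AB(1,2) unfolding marked_BN_general_def by blast+
  ultimately have "(r + 1) * (r + genus V1 m1 + genus V2 m2 - deg V1 A - deg V2 B)
      \<le> genus V1 m1 + genus V2 m2"
    using r(1) by simp
  then show "0 \<le> genus ?W ?w - (r + 1) * (genus ?W ?w - deg ?W D + r)"
    unfolding genus_wedge[OF assms(1-4)] deg by (simp add: algebra_simps)
qed

end
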